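(* For $n\ge 4$, the polynomials $W_n(t)=\sum_{\sigma\in\{-1,1\}^n} t^{\nu_W(\sigma)}$ satisfy \[ W_n(t)=W_{n-1}(t)+2W_{n-2}(t)+2(t-1)W_{n-3}(t). \]
   Context: Seating model. A circular table has $n\ge 1$ seats, with exactly one napkin between each pair of adjacent seats ($n$ napkins in total). "Left" and "right" are from the perspective of a seated diner. Diners $1,\dots,n$ arrive in this order and a maitre d' chooses a seat for each. A preference order is $\sigma=(\sigma_1,\dots,\sigma_n)\in\{-1,1\}^n$, where $\sigma_j=+1$ means diner $j$ prefers the napkin on their right and $\sigma_j=-1$ the napkin on their left. When diner $j$ is seated, they take their preferred adjacent napkin if it is still on the table; otherwise the other adjacent napkin if still on the table; otherwise they are napkinless. The maitre d' observes which napkin each seated diner takes. The "previous diner" means the most recently seated diner. Algorithm $W$ (trap setting). Seat diner 1; the primary direction $d\in\{\text{left},\text{right}\}$ is the side of the napkin diner 1 takes. All movement below is in direction $d$. (W1) If the two seats at distance 1 and 2 in direction $d$ from the previous diner's seat are both empty, go to W2; otherwise go to W4. (W2) If the previous diner took the napkin on their side $d$, seat the next diner two seats in direction $d$ from the previous diner and return to W1; otherwise go to W3. (W3) Seat the next diner one seat in direction $d$ from the previous diner and return to W1. (W4) Seat all remaining diners, one at a time in order of arrival, in the empty seats, in the order in which these seats are encountered moving in direction $d$ starting from diner 1's seat. $\nu_W(\sigma)$ is the number of napkinless diners when the $n$ diners with preference order $\sigma$ are seated at the circular table with $n$ seats by algorithm $W$, and $W_n(t)=\sum_{\sigma\in\{-1,1\}^n}t^{\nu_W(\sigma)}$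 (so e.g. $W_1(t)=2$, $W_2(t)=4$, $W_3(t)=4+4t$). *)

theory Defs
  imports "HOL-Computational_Algebra.Polynomial"
begin

(* Seats 0..n-1 around the table; "right" of seat s is seat s+1 (mod n).
   Napkin i lies between seat i and seat i+1 (mod n).  So the napkin on the
   right of seat s is napkin s, the one on its left is napkin s-1 (mod n).
   Directions/preferences are encoded as ints: 1 = right, -1 = left. *)

definition mv :: "nat \<Rightarrow> int \<Rightarrow> int \<Rightarrow> nat \<Rightarrow> nat" where
  "mv n d k s = nat ((int s + k * d) mod int n)"

definition napSide :: "nat \<Rightarrow> int \<Rightarrow> nat \<Rightarrow> nat" where
  "napSide n d s = (if d = 1 then s else nat ((int s - 1) mod int n))"

definition grab :: "nat \<Rightarrow> int \<Rightarrow> nat \<Rightarrow> nat set \<Rightarrow> nat option" where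
  "grab n sg s T =
     (if napSide n sg s \<notin> T then Some (napSide n sg s)
      else if napSide n (- sg) s \<notin> T then Some (napSide n (- sg) s)
      else None)"

record wstate =
  occ :: "nat set"
  taken :: "nat set"
  bare :: nat           (* number of napkinless diners so far *)
  prev :: nat
  prevd :: bool         (* previous diner took the napkin on their side d *)
  w4 :: bool

definition seat_diner :: "nat \<Rightarrow> int \<Rightarrow> int \<Rightarrow> nat \<Rightarrow> wstate \<Rightarrow> wstate" where
  "seat_diner n d sg s st =
     (case grab n sg s (taken st) of
        None \<Rightarrow> st\<lparr>occ := insert s (occ st), bare := bare st + 1, prev := s, prevd := False\<rparr>
      | Some p \<Rightarrow> st\<lparr>occ := insert s (occ st), taken := insert p (taken st), prev := s,
                      prevd := (p = napSide n d s)\<rparr>)"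

(* choice of the next seat: steps W1-W3, or W4 (first empty seat met moving in
   direction d from diner 1's seat, which is seat 0) *)
definition next_seat :: "nat \<Rightarrow> int \<Rightarrow> wstate \<Rightarrow> bool \<times> nat" where
  "next_seat n d st =
     (if \<not> w4 st \<and> mv n d 1 (prev st) \<notin> occ st \<and> mv n d 2 (prev st) \<notin> occ st
      then (False, if prevd st then mv n d 2 (prev st) else mv n d 1 (prev st))
      else (True, mv n d (int (LEAST k::nat. mv n d (int k) 0 \<notin> occ st)) 0))"

definition wstep :: "nat \<Rightarrow> int \<Rightarrow> wstate \<Rightarrow> int \<Rightarrow> wstate" where
  "wstep n d st sg = (case next_seat n d st of (f, s) \<Rightarrow> seat_diner n d sg s (st\<lparr>w4 := f\<rparr>))"

(* nu_W(sigma): sigma is the preference list (sigma_1,...,sigma_n), n = length sigma *)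
definition nuW :: "int list \<Rightarrow> nat" where
  "nuW \<sigma> = (case \<sigma> of [] \<Rightarrow> 0
     | d # rest \<Rightarrow>
        (let n = length \<sigma>;
             st0 = \<lparr>occ = {0}, taken = {napSide n d 0}, bare = 0, prev = 0, prevd = True, w4 = False\<rparr>
         in bare (foldl (wstep n d) st0 rest)))"

definition Wpoly :: "nat \<Rightarrow> int poly" where
  "Wpoly n = (\<Sum>\<sigma>\<in>{\<sigma>. length \<sigma> = n \<and> set \<sigma> \<subseteq> {-1, 1}}. monom 1 (nuW \<sigma>))"

end

theory Submission
  imports Defs
begin

(*
  Number the positions 0, 1, 2, ... from diner 1's seat in direction d.  While the maitre d'
  follows W1-W3, the occupied positions form a run starting at 0 whose gaps are single seats
  (holes), and nobody is napkinless.  A hole h is a trap when both napkins h - 1 and h next to it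
  are gone; this happens exactly when the diner at h - 1 took the napkin on side d and the diner
  at h + 1 then took the one on the other side.  In W4 the remaining diners fill isolated empty
  seats, whose napkin pairs are disjoint, so exactly the diners seated in traps are napkinless,
  whatever their preferences.  Summing over preferences, the contribution g r s (tail_poly) of
  the r seats ahead of the previous diner, where s tells whether that diner took the napkin on
  side d, obeys
    g (r + 2) true = 2 g r true + 2 t g r false,    g (r + 1) false = g r true + g r false.
  Hence W_n = 2 g (n - 1) true, and eliminating g false gives the recurrence.
*)

section \<open>Preference lists and seating one diner\<close>

definition prefs :: "nat \<Rightarrow> int list set" where
  "prefs m = {\<sigma>. set \<sigma> \<subseteq> {-1, 1} \<and> length \<sigma> = m}"

lemma card_prefs: "card (prefs m) = 2 ^ m"
  unfolding prefs_def by (simp add: card_lists_length_eq numeral_2_eq_2)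

lemma sum_prefs_Suc:
  "(\<Sum>\<sigma>\<in>prefs (Suc m). h \<sigma>) = (\<Sum>a\<in>{-1, 1}. \<Sum>\<sigma>\<in>prefs m. h (a # \<sigma>))"
proof -
  have "inj_on (\<lambda>p. snd p # fst p) (prefs m \<times> {-1, 1})"
    by (auto simp: inj_on_def)
  then have "(\<Sum>\<sigma>\<in>prefs (Suc m). h \<sigma>) = (\<Sum>(\<sigma>, a)\<in>prefs m \<times> {-1, 1}. h (a # \<sigma>))"
    unfolding prefs_def lists_length_Suc_eq by (simp add: sum.reindex case_prod_beta)
  also have "\<dots> = (\<Sum>a\<in>{-1, 1}. \<Sum>\<sigma>\<in>prefs m. h (a # \<sigma>))"
    by (simp add: sum.cartesian_product' sum.distrib)
  finally show ?thesis .
qed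

lemma card_Collect_remove:
  assumes "finite A" "x \<in> A"
  shows "card {a \<in> A. P a} = card {a \<in> A - {x}. P a} + of_bool (P x)"
proof -
  have "{a \<in> A. P a} = (if P x then insert x else id) {a \<in> A - {x}. P a}"
    using assms(2) by auto
  then show ?thesis
    using assms(1) by (simp add: card_insert_if)
qed

definition seat_napkins :: "nat \<Rightarrow> nat \<Rightarrow> nat set" where
  "seat_napkins n s = {napSide n 1 s, napSide n (-1) s}"

lemma grab_eq_None_iff:
  "sg \<in> {-1, 1} \<Longrightarrow> grab n sg s T = None \<longleftrightarrow> seat_napkins n s \<subseteq> T"
  unfolding grab_def seat_napkins_def by auto

lemma grab_in_seat_napkins:
  "sg \<in> {-1, 1} \<Longrightarrow> grab n sg s T = Some p \<Longrightarrow> p \<in> seat_napkins n s"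
  unfolding grab_def seat_napkins_def by (auto split: if_splits)

lemma seat_diner_props:
  assumes "sg \<in> {-1, 1}"
  shows "occ (seat_diner n d sg s st) = insert s (occ st)"
    and "bare (seat_diner n d sg s st) = bare st + of_bool (seat_napkins n s \<subseteq> taken st)"
    and "taken st \<subseteq> taken (seat_diner n d sg s st)"
    and "taken (seat_diner n d sg s st) \<subseteq> taken st \<union> seat_napkins n s"
  using grab_eq_None_iff[OF assms, of n s "taken st"] grab_in_seat_napkins[OF assms, of n s "taken st"]
  unfolding seat_diner_def by (auto split: option.splits)

definition completions_poly :: "nat \<Rightarrow> int \<Rightarrow> wstate \<Rightarrow> nat \<Rightarrow> int poly" where
  "completions_poly n d st m = (\<Sum>\<sigma>\<in>prefs m. monom 1 (bare (foldl (wstep n d) st \<sigma>)))"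

lemma completions_poly_Suc:
  "completions_poly n d st (Suc m) = (\<Sum>a\<in>{-1, 1}. completions_poly n d (wstep n d st a) m)"
  unfolding completions_poly_def sum_prefs_Suc by simp

definition initial_state :: "nat \<Rightarrow> int \<Rightarrow> wstate" where
  "initial_state n d =
     \<lparr>occ = {0}, taken = {napSide n d 0}, bare = 0, prev = 0, prevd = True, w4 = False\<rparr>"

lemma Wpoly_Suc:
  "Wpoly (Suc m) = (\<Sum>d\<in>{-1, 1}. completions_poly (Suc m) d (initial_state (Suc m) d) m)"
proof -
  have "Wpoly (Suc m) = (\<Sum>\<sigma>\<in>prefs (Suc m). monom 1 (nuW \<sigma>))"
    unfolding Wpoly_def prefs_def by (simp add: conj_commute)
  then show ?thesis
    unfolding sum_prefs_Suc completions_poly_def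
    by (simp add: nuW_def initial_state_def prefs_def)
qed

section \<open>Holes and traps\<close>

(* X: occupied positions, N: positions of the taken napkins, x: position of the previous diner,
   s: whether that diner took the napkin on side d. *)

definition holes :: "int set \<Rightarrow> int \<Rightarrow> int set" where
  "holes X x = {0..x} - X"

definition traps :: "int set \<Rightarrow> int set \<Rightarrow> int \<Rightarrow> int set" where
  "traps X N x = {h \<in> holes X x. h - 1 \<in> N \<and> h \<in> N}"

definition trap_pattern :: "int \<Rightarrow> bool \<Rightarrow> int set \<Rightarrow> int set \<Rightarrow> bool" where
  "trap_pattern x s X N \<longleftrightarrow>
     X \<subseteq> {0..x} \<and> 0 \<in> X \<and> x \<in> X \<and> (\<forall>h\<in>{0..<x}. h \<in> X \<or> h + 1 \<in> X) \<and>
     N \<subseteq> {0..x} \<and> (x \<in> N \<longleftrightarrow> s)"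

lemma card_holes:
  assumes "X \<subseteq> {0..x}"
  shows "card X + card (holes X x) = nat (x + 1)"
proof -
  have "finite X"
    using assms finite_subset by blast
  then show ?thesis
    using assms card_mono[OF _ assms] by (simp add: holes_def card_Diff_subset)
qed

lemma trap_pattern_step:
  assumes pattern: "trap_pattern x s X N"
    and y: "y = x + (if s then 2 else 1)" and q: "q = (if b then y else y - 1)"
  shows "trap_pattern y b (insert y X) (insert q N)"
    and "card (holes (insert y X) y) = card (holes X x) + of_bool s"
    and "card (traps (insert y X) (insert q N) y) = card (traps X N x) + of_bool (s \<and> \<not> b)"
proof -
  have "h \<in> insert y X \<or> h + 1 \<in> insert y X" if "h \<in> {0..<y}" for h
    using pattern that unfolding trap_pattern_def y
    by (cases "h < x") (auto simp: not_less_iff_gr_or_eq)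
  then show "trap_pattern y b (insert y X) (insert q N)"
    using pattern unfolding trap_pattern_def y q by auto
  have "holes (insert y X) y = holes X x \<union> (if s then {x + 1} else {})"
    using pattern unfolding trap_pattern_def holes_def y by auto
  then show "card (holes (insert y X) y) = card (holes X x) + of_bool s"
    by (simp add: holes_def)
  have "traps (insert y X) (insert q N) y = traps X N x \<union> (if s \<and> \<not> b then {x + 1} else {})"
    using pattern unfolding trap_pattern_def traps_def holes_def y q by auto
  moreover have "x + 1 \<notin> traps X N x"
    unfolding traps_def holes_def by auto
  moreover have "finite (traps X N x)"
    by (rule finite_subset[of _ "{0..x}"]) (auto simp: traps_def holes_def)
  ultimately show "card (traps (insert y X) (insert q N) y) = card (traps X N x) + of_bool (s \<and> \<not> b)"
    by simp
qed

(* The generating polynomial of the r seats ahead of the previous diner, s as above; the factor 2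
   of every hole and t of every trap already behind the previous diner are not included. *)
fun tail_poly :: "nat \<Rightarrow> bool \<Rightarrow> int poly" where
  "tail_poly 0 s = 1"
| "tail_poly (Suc 0) s = 2"
| "tail_poly (Suc (Suc r)) True = 2 * tail_poly r True + 2 * [:0, 1:] * tail_poly r False"
| "tail_poly (Suc (Suc r)) False = tail_poly (Suc r) True + tail_poly (Suc r) False"

lemma tail_poly_Suc_False: "tail_poly (Suc r) False = tail_poly r True + tail_poly r False"
  by (cases r) simp_all

lemma tail_poly_le_1: "r \<le> 1 \<Longrightarrow> tail_poly r s = 2 ^ r"
  by (cases r) auto

lemma tail_poly_step:
  "2 ^ of_bool s * (monom 1 T * tail_poly r True + monom 1 (T + of_bool s) * tail_poly r False) =
    monom 1 T * tail_poly (r + (if s then 2 else 1)) s"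
proof -
  have "monom (1 :: int) (Suc T) = [:0, 1:] * monom 1 T"
    by (simp add: monom_Suc)
  then show ?thesis
    by (cases s) (simp_all add: tail_poly_Suc_False algebra_simps)
qed

lemma tail_poly_True_rec:
  "tail_poly (Suc (Suc (Suc r))) True =
    tail_poly (Suc (Suc r)) True + 2 * tail_poly (Suc r) True + 2 * [:-1, 1:] * tail_poly r True"
proof -
  have "[:-1, 1:] = [:0, 1:] - (1 :: int poly)"
    by (simp add: one_pCons)
  then show ?thesis
    by (simp add: tail_poly_Suc_False algebra_simps)
qed

section \<open>Circular coordinates\<close>

locale napkin_table =
  fixes n :: nat and d :: int
  assumes n_pos: "0 < n" and d_unit: "d \<in> {-1, 1}"
begin

(* Position k is the seat k steps from seat 0 in direction d; napkin_at k lies between the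
   positions k and k + 1. *)

definition seat_at :: "int \<Rightarrow> nat" where
  "seat_at k = mv n d k 0"

definition napkin_at :: "int \<Rightarrow> nat" where
  "napkin_at k = napSide n d (seat_at k)"

lemma int_seat_at: "int (seat_at k) = (k * d) mod int n"
  unfolding seat_at_def mv_def using n_pos by simp

lemma eq_seat_atI: "int s = (k * d) mod int n \<Longrightarrow> s = seat_at k"
  by (simp flip: int_seat_at)

lemma mv_less: "mv n d k s < n"
  unfolding mv_def using n_pos by (simp add: nat_less_iff)

lemma seat_at_less: "seat_at k < n"
  unfolding seat_at_def by (rule mv_less)

lemma seat_at_0: "seat_at 0 = 0"
  by (simp add: seat_at_def mv_def)

lemma mv_mv: "mv n d j (mv n d k s) = mv n d (k + j) s"
  unfolding mv_def using n_pos by (simp add: mod_add_left_eq distrib_right add.assoc)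

lemma mv_seat_at: "mv n d j (seat_at k) = seat_at (k + j)"
  unfolding seat_at_def by (rule mv_mv)

lemma seat_at_eq_iff: "seat_at j = seat_at k \<longleftrightarrow> int n dvd j - k"
proof -
  have "seat_at j = seat_at k \<longleftrightarrow> (j * d) mod int n = (k * d) mod int n"
    by (metis int_seat_at of_nat_eq_iff)
  also have "\<dots> \<longleftrightarrow> int n dvd (j - k) * d"
    by (simp add: mod_eq_dvd_iff left_diff_distrib)
  also have "\<dots> \<longleftrightarrow> int n dvd j - k"
    using d_unit by (auto simp: dvd_diff_commute)
  finally show ?thesis .
qed

lemma inj_on_seat_at: "inj_on seat_at {0..<int n}"
  by (auto simp: inj_on_def seat_at_eq_iff simp flip: mod_eq_dvd_iff)

lemma seat_at_surj: "seat_at ` {0..<int n} = {..<n}"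
proof (rule card_subset_eq)
  show "card (seat_at ` {0..<int n}) = card {..<n}"
    using card_image[OF inj_on_seat_at] by simp
qed (use seat_at_less in auto)

lemma napkin_at_eq: "napkin_at k = seat_at (if d = 1 then k else k + 1)"
proof (cases "d = 1")
  case False
  have "int (napkin_at k) = ((k * d) mod int n - 1) mod int n"
    unfolding napkin_at_def napSide_def using False n_pos int_seat_at[of k] by simp
  also have "\<dots> = ((k + 1) * d) mod int n"
    using False d_unit by (simp add: mod_diff_left_eq)
  finally show ?thesis
    using False by (simp add: eq_seat_atI)
qed (unfold napkin_at_def napSide_def, simp)

lemma napkin_at_eq_iff: "napkin_at j = napkin_at k \<longleftrightarrow> int n dvd j - k"
  unfolding napkin_at_eq seat_at_eq_iff by simp

lemma inj_on_napkin_at: "inj_on napkin_at {0..<int n}"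
  by (auto simp: inj_on_def napkin_at_eq_iff simp flip: mod_eq_dvd_iff)

lemma napSide_opposite_seat_at: "napSide n (-d) (seat_at k) = napkin_at (k - 1)"
proof (cases "d = 1")
  case True
  have "int (napSide n (-d) (seat_at k)) = ((k * d) mod int n - 1) mod int n"
    unfolding napSide_def using True n_pos int_seat_at[of k] by simp
  also have "\<dots> = ((k - 1) * d) mod int n"
    using True by (simp add: mod_diff_left_eq)
  finally have "napSide n (-d) (seat_at k) = seat_at (k - 1)"
    by (rule eq_seat_atI)
  then show ?thesis
    using True napkin_at_eq[of "k - 1"] by simp
next
  case False
  then show ?thesis
    using d_unit napkin_at_eq[of "k - 1"] by (simp add: napSide_def)
qed

lemma seat_napkins_seat_at: "seat_napkins n (seat_at k) = {napkin_at k, napkin_at (k - 1)}"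
  using d_unit napSide_opposite_seat_at[of k] unfolding seat_napkins_def napkin_at_def by auto

lemma sum_directions: "(\<Sum>a\<in>{-1, 1}. f a) = f d + f (-d)"
  using d_unit by (auto simp: add.commute)

section \<open>Phase W4\<close>

lemma seat_napkins_disjoint:
  assumes "e < n" "e' < n" "e \<noteq> e'" "mv n d 1 e \<noteq> e'" "mv n d 1 e' \<noteq> e"
  shows "seat_napkins n e \<inter> seat_napkins n e' = {}"
proof -
  obtain k k' where "e = seat_at k" "e' = seat_at k'"
    using assms(1,2) seat_at_surj by (metis imageE lessThan_iff)
  then show ?thesis
    using assms(3-5)
    by (auto simp: seat_napkins_seat_at mv_seat_at seat_at_eq_iff napkin_at_eq_iff
        dvd_diff_commute[of _ k] algebra_simps)
qed

lemma next_seat_isolated: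
  assumes isolated: "\<forall>e\<in>{..<n} - occ st. mv n d 1 e \<in> occ st"
    and nonfull: "{..<n} - occ st \<noteq> {}"
  obtains s where "next_seat n d st = (True, s)" and "s \<in> {..<n} - occ st"
proof -
  have "mv n d 1 (mv n d 1 (prev st)) = mv n d 2 (prev st)" "mv n d 1 (prev st) \<in> {..<n}"
    using mv_mv[of 1 1] mv_less by simp_all
  then have no_pair: "\<not> (mv n d 1 (prev st) \<notin> occ st \<and> mv n d 2 (prev st) \<notin> occ st)"
    using isolated by (metis DiffI)
  obtain e where "e \<in> {..<n} - occ st"
    using nonfull by blast
  then obtain k where "k \<in> {0..<int n}" "seat_at k \<notin> occ st"
    using seat_at_surj by (metis DiffD1 DiffD2 imageE)
  then have "seat_at (int (nat k)) \<notin> occ st"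
    by simp
  then have "seat_at (int (LEAST k. seat_at (int k) \<notin> occ st)) \<notin> occ st"
    by (rule LeastI)
  with no_pair show ?thesis
    by (intro that) (auto simp: next_seat_def seat_at_def mv_less)
qed

lemma bare_foldl_isolated:
  assumes "set \<sigma> \<subseteq> {-1, 1}" "occ st \<subseteq> {..<n}" "card ({..<n} - occ st) = length \<sigma>"
    "\<forall>e\<in>{..<n} - occ st. mv n d 1 e \<in> occ st"
  shows "bare (foldl (wstep n d) st \<sigma>) =
    bare st + card {e \<in> {..<n} - occ st. seat_napkins n e \<subseteq> taken st}"
  using assms
proof (induction \<sigma> arbitrary: st)
  case (Cons a \<sigma>)
  define E where "E = {..<n} - occ st"
  have "E \<noteq> {}"
    using Cons.prems(3) unfolding E_def by (metis card.empty nat.distinct(1) length_Cons)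
  then obtain s where next_s: "next_seat n d st = (True, s)" and "s \<in> E"
    using next_seat_isolated Cons.prems(4) unfolding E_def by blast
  define st' where "st' = seat_diner n d a s (st\<lparr>w4 := True\<rparr>)"
  have step: "wstep n d st a = st'"
    by (simp add: wstep_def next_s st'_def)
  have "a \<in> {-1, 1}"
    using Cons.prems(1) by simp
  note st' = seat_diner_props[OF this, where n = n and d = d and s = s and st = "st\<lparr>w4 := True\<rparr>",
      folded st'_def, simplified]
  have "{..<n} - occ st' = E - {s}"
    using st'(1) unfolding E_def by auto
  then have IH: "bare (foldl (wstep n d) st' \<sigma>) =
      bare st' + card {e \<in> E - {s}. seat_napkins n e \<subseteq> taken st'}"
    using Cons.IH[of st'] Cons.prems \<open>s \<in> E\<close> st'(1) unfolding E_def
    by (auto simp: card_Diff_singleton)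
  have "seat_napkins n e \<subseteq> taken st' \<longleftrightarrow> seat_napkins n e \<subseteq> taken st" if "e \<in> E - {s}" for e
  proof -
    have "seat_napkins n e \<inter> seat_napkins n s = {}"
      using that \<open>s \<in> E\<close> Cons.prems(4) by (intro seat_napkins_disjoint) (auto simp: E_def)
    then show ?thesis
      using st'(3,4) by auto
  qed
  then have unchanged: "{e \<in> E - {s}. seat_napkins n e \<subseteq> taken st'} =
      {e \<in> E - {s}. seat_napkins n e \<subseteq> taken st}"
    by blast
  have "card {e \<in> E. seat_napkins n e \<subseteq> taken st} =
      card {e \<in> E - {s}. seat_napkins n e \<subseteq> taken st} + of_bool (seat_napkins n s \<subseteq> taken st)"
    using \<open>s \<in> E\<close> by (intro card_Collect_remove) (simp_all add: E_def)
  then show ?case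
    using IH unchanged st'(2) by (simp add: step flip: E_def)
qed simp

lemma completions_poly_isolated:
  assumes "occ st \<subseteq> {..<n}" "\<forall>e\<in>{..<n} - occ st. mv n d 1 e \<in> occ st"
  shows "completions_poly n d st (card ({..<n} - occ st)) =
    2 ^ card ({..<n} - occ st) *
      monom 1 (bare st + card {e \<in> {..<n} - occ st. seat_napkins n e \<subseteq> taken st})"
proof -
  let ?m = "card ({..<n} - occ st)"
  have "completions_poly n d st ?m =
      (\<Sum>\<sigma>\<in>prefs ?m. monom 1 (bare st + card {e \<in> {..<n} - occ st. seat_napkins n e \<subseteq> taken st}))"
    unfolding completions_poly_def using assms
    by (intro sum.cong refl) (simp add: prefs_def bare_foldl_isolated)
  then show ?thesis
    by (simp add: card_prefs)
qed

section \<open>Phase W1-W3\<close>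

definition trap_setting :: "wstate \<Rightarrow> int \<Rightarrow> bool \<Rightarrow> int set \<Rightarrow> int set \<Rightarrow> bool" where
  "trap_setting st x s X N \<longleftrightarrow> trap_pattern x s X N \<and> x < int n \<and>
     occ st = seat_at ` X \<and> taken st = napkin_at ` N \<and> prev st = seat_at x \<and> prevd st = s \<and>
     \<not> w4 st \<and> bare st = 0"

lemma trap_setting_subset:
  assumes "trap_setting st x s X N"
  shows "X \<subseteq> {0..<int n}" and "N \<subseteq> {0..<int n}"
  using assms unfolding trap_setting_def trap_pattern_def by auto

lemma wstep_trap_setting:
  assumes setting: "trap_setting st x s X N" and room: "x + 3 \<le> int n" and a: "a \<in> {-1, 1}"
    and y: "y = x + (if s then 2 else 1)" and q: "q = (if a = d then y else y - 1)"
  shows "trap_setting (wstep n d st a) y (a = d) (insert y X) (insert q N)"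
proof -
  have pattern: "trap_pattern x s X N"
    and st: "occ st = seat_at ` X" "taken st = napkin_at ` N" "prev st = seat_at x" "prevd st = s"
      "\<not> w4 st"
    using setting unfolding trap_setting_def by auto
  then have X: "X \<subseteq> {0..x}" "N \<subseteq> {0..x}" "x \<in> N \<longleftrightarrow> s" "0 \<le> x"
    unfolding trap_pattern_def by auto
  note range = trap_setting_subset[OF setting]
  have free_seat: "seat_at k \<notin> occ st" if "x < k" "k < n" for k
    using X range that inj_on_image_mem_iff[OF inj_on_seat_at, of k X] unfolding st by auto
  have next_y: "next_seat n d st = (False, seat_at y)"
    using free_seat[of "x + 1"] free_seat[of "x + 2"] room
    by (simp add: next_seat_def st mv_seat_at y add.commute)
  have q_free: "q \<notin> N" and q_range: "q \<in> {0..<int n}"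
    using X room unfolding q y by auto
  have nap_q: "napSide n a (seat_at y) = napkin_at q"
  proof (cases "a = d")
    case False
    then have "a = -d"
      using a d_unit by auto
    then show ?thesis
      using False by (simp add: q napSide_opposite_seat_at)
  qed (simp add: q napkin_at_def)
  have "napkin_at q \<notin> taken st"
    using range q_free q_range inj_on_image_mem_iff[OF inj_on_napkin_at, of q N] unfolding st by auto
  then have grab_q: "grab n a (seat_at y) (taken st) = Some (napkin_at q)"
    by (simp add: grab_def nap_q)
  have "napkin_at q = napkin_at y \<longleftrightarrow> q = y"
    using q_range room X(4) by (intro inj_on_eq_iff[OF inj_on_napkin_at]) (auto simp: y)
  then have "napkin_at q = napSide n d (seat_at y) \<longleftrightarrow> a = d"
    unfolding napkin_at_def[symmetric] q by simp
  then have "wstep n d st a = st\<lparr>w4 := False, occ := insert (seat_at y) (occ st),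
      taken := insert (napkin_at q) (taken st), prev := seat_at y, prevd := (a = d)\<rparr>"
    by (simp add: wstep_def next_y seat_diner_def grab_q)
  then show ?thesis
    using trap_pattern_step(1)[OF pattern y q] setting room unfolding trap_setting_def y by auto
qed

lemma trap_setting_empty_seats:
  assumes setting: "trap_setting st x s X N"
  shows "{..<n} - occ st = seat_at ` ({0..<int n} - X)"
    and "card ({..<n} - occ st) = n - card X"
proof -
  note range = trap_setting_subset[OF setting]
  show empty: "{..<n} - occ st = seat_at ` ({0..<int n} - X)"
    using setting inj_on_seat_at range(1) unfolding trap_setting_def seat_at_surj[symmetric]
    by (simp add: inj_on_image_set_diff)
  have "finite X"
    using range(1) finite_subset by blast
  then show "card ({..<n} - occ st) = n - card X"
    unfolding empty using range(1)
    by (simp add: card_image inj_on_subset[OF inj_on_seat_at] card_Diff_subset)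
qed

lemma trap_setting_end_isolated:
  assumes setting: "trap_setting st x s X N" and full: "int n \<le> x + 2"
  shows "\<forall>e\<in>{..<n} - occ st. mv n d 1 e \<in> occ st"
proof -
  have X: "0 \<in> X" "x \<in> X" "\<forall>h\<in>{0..<x}. h \<in> X \<or> h + 1 \<in> X" and st: "occ st = seat_at ` X"
    using setting unfolding trap_setting_def trap_pattern_def by auto
  have "seat_at (h + 1) \<in> occ st" if "h \<in> {0..<int n} - X" for h
  proof (cases "h < x")
    case False
    (* the only empty position beyond x is n - 1, next to diner 1 *)
    then have "h + 1 = int n"
      using that X(2) full by (cases "h = x") auto
    then show ?thesis
      using X(1) seat_at_eq_iff[of "h + 1" 0] unfolding st by auto
  qed (use that X(3) st in auto)
  then show ?thesis
    unfolding trap_setting_empty_seats(1)[OF setting] by (auto simp: mv_seat_at)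
qed

lemma trap_setting_napkinless:
  assumes setting: "trap_setting st x s X N"
  shows "card {e \<in> {..<n} - occ st. seat_napkins n e \<subseteq> taken st} = card (traps X N x)"
proof -
  have X: "0 \<in> X" "N \<subseteq> {0..x}" and st: "taken st = napkin_at ` N"
    using setting unfolding trap_setting_def trap_pattern_def by auto
  note range = trap_setting_subset[OF setting]
  have "seat_napkins n (seat_at h) \<subseteq> taken st \<longleftrightarrow> h - 1 \<in> N \<and> h \<in> N"
    if "h \<in> {0..<int n} - X" for h
  proof -
    have "h - 1 \<in> {0..<int n}"
      using that X(1) by (cases "h = 0") auto
    then show ?thesis
      using that range(2) inj_on_image_mem_iff[OF inj_on_napkin_at]
      by (simp add: seat_napkins_seat_at st conj_commute)
  qed
  then have "{e \<in> {..<n} - occ st. seat_napkins n e \<subseteq> taken st} =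
      seat_at ` {h \<in> {0..<int n} - X. h - 1 \<in> N \<and> h \<in> N}"
    unfolding trap_setting_empty_seats(1)[OF setting] by auto
  also have "{h \<in> {0..<int n} - X. h - 1 \<in> N \<and> h \<in> N} = traps X N x"
    using X(2) range unfolding traps_def holes_def by auto
  finally have "{e \<in> {..<n} - occ st. seat_napkins n e \<subseteq> taken st} = seat_at ` traps X N x" .
  moreover have "traps X N x \<subseteq> {0..<int n}"
    using range(2) unfolding traps_def by auto
  ultimately show ?thesis
    by (simp add: card_image inj_on_subset[OF inj_on_seat_at])
qed

lemma completions_poly_trap_end:
  assumes setting: "trap_setting st x s X N" and full: "int n \<le> x + 2"
  shows "completions_poly n d st (n - card X) = 2 ^ (n - card X) * monom 1 (card (traps X N x))"
proof -
  have "occ st \<subseteq> {..<n}" "bare st = 0"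
    using setting seat_at_less unfolding trap_setting_def by auto
  from completions_poly_isolated[OF this(1) trap_setting_end_isolated[OF setting full]] show ?thesis
    unfolding trap_setting_empty_seats(2)[OF setting] trap_setting_napkinless[OF setting] \<open>bare st = 0\<close>
    by simp
qed

lemma completions_poly_trap_split:
  assumes setting: "trap_setting st x s X N" and room: "x + 3 \<le> int n"
    and y: "y = x + (if s then 2 else 1)"
  shows "completions_poly n d st (n - card X) =
    completions_poly n d (wstep n d st d) (n - card (insert y X)) +
    completions_poly n d (wstep n d st (-d)) (n - card (insert y X))"
proof -
  have X: "X \<subseteq> {0..x}" "0 \<le> x"
    using setting unfolding trap_setting_def trap_pattern_def by auto
  then have "y \<notin> X" "finite X"
    using finite_subset unfolding y by auto
  then have "n - card X = Suc (n - card (insert y X))"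
    using card_holes[OF X(1)] room X(2) unfolding y by simp
  then show ?thesis
    by (simp add: completions_poly_Suc sum_directions)
qed

lemma completions_poly_trap_setting:
  assumes "trap_setting st x s X N"
  shows "completions_poly n d st (n - card X) =
    2 ^ card (holes X x) * monom 1 (card (traps X N x)) * tail_poly (nat (int n - 1 - x)) s"
  using assms
proof (induction "nat (int n - 1 - x)" arbitrary: st x s X N rule: less_induct)
  case less
  have pattern: "trap_pattern x s X N" and "x < int n"
    using less.prems unfolding trap_setting_def by auto
  then have X: "X \<subseteq> {0..x}" "0 \<le> x"
    unfolding trap_pattern_def by auto
  define H where "H = card (holes X x)"
  define T where "T = card (traps X N x)"
  show ?case
  proof (cases "int n \<le> x + 2")
    case True
    have "n - card X = H + nat (int n - 1 - x)" and "nat (int n - 1 - x) \<le> 1"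
      using card_holes[OF X(1)] \<open>x < int n\<close> X(2) True unfolding H_def by linarith+
    with completions_poly_trap_end[OF less.prems True] show ?thesis
      by (simp add: tail_poly_le_1 power_add H_def T_def)
  next
    case False
    then have room: "x + 3 \<le> int n"
      by simp
    define y where "y = x + (if s then 2 else 1)"
    define m where "m = n - card (insert y X)"
    define r where "r = nat (int n - 1 - y)"
    have "completions_poly n d st (n - card X) =
        completions_poly n d (wstep n d st d) m + completions_poly n d (wstep n d st (-d)) m"
      unfolding m_def by (rule completions_poly_trap_split[OF less.prems room y_def])
    moreover have "completions_poly n d (wstep n d st a) m =
        2 ^ (H + of_bool s) * monom 1 (T + of_bool (s \<and> a \<noteq> d)) * tail_poly r (a = d)"
      if "a \<in> {-1, 1}" for a
      using less.hyps[OF _ wstep_trap_setting[OF less.prems room that y_def refl]] room X(2)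
        trap_pattern_step(2,3)[where b = "a = d", OF pattern y_def refl]
      unfolding m_def r_def H_def T_def y_def by auto
    moreover have "-d \<in> {-1, 1}" "d \<noteq> -d"
      using d_unit by auto
    ultimately have "completions_poly n d st (n - card X) = 2 ^ H *
        (2 ^ of_bool s * (monom 1 T * tail_poly r True + monom 1 (T + of_bool s) * tail_poly r False))"
      using d_unit by (simp add: power_add algebra_simps)
    also have "\<dots> = 2 ^ H * monom 1 T * tail_poly (r + (if s then 2 else 1)) s"
      unfolding tail_poly_step by (simp add: mult.assoc)
    also have "r + (if s then 2 else 1) = nat (int n - 1 - x)"
      using room unfolding r_def y_def by auto
    finally show ?thesis
      unfolding H_def T_def .
  qed
qed

lemma completions_poly_initial_state:
  "completions_poly n d (initial_state n d) (n - 1) = tail_poly (n - 1) True"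
proof -
  have "trap_setting (initial_state n d) 0 True {0} {0}"
    using n_pos
    by (simp add: trap_setting_def trap_pattern_def initial_state_def seat_at_0 napkin_at_def)
  from completions_poly_trap_setting[OF this] show ?thesis
    using n_pos by (simp add: holes_def traps_def nat_diff_distrib')
qed

end

lemma Wpoly_eq_tail_poly: "0 < n \<Longrightarrow> Wpoly n = 2 * tail_poly (n - 1) True"
proof -
  assume "0 < n"
  then have "napkin_table n d" if "d \<in> {-1, 1}" for d
    using that by unfold_locales
  then show ?thesis
    using Wpoly_Suc[of "n - 1"] \<open>0 < n\<close> napkin_table.completions_poly_initial_state
    by simp
qed

theorem proposition2:
  fixes n :: nat
  assumes "n \<ge> 4"
  shows "Wpoly n = Wpoly (n - 1) + 2 * Wpoly (n - 2) + 2 * [:-1, 1:] * Wpoly (n - 3)"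
proof -
  define r where "r = n - 4"
  then have "n = Suc (Suc (Suc (Suc r)))"
    using assms by simp
  then have "Wpoly n = 2 * tail_poly (Suc (Suc (Suc r))) True"
    and "Wpoly (n - 1) = 2 * tail_poly (Suc (Suc r)) True"
    and "Wpoly (n - 2) = 2 * tail_poly (Suc r) True"
    and "Wpoly (n - 3) = 2 * tail_poly r True"
    by (simp_all add: Wpoly_eq_tail_poly)
  then show ?thesis
    unfolding tail_poly_True_rec by (simp only: distrib_left mult.left_commute)
qed

end
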